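(* Let $V=(J,(V_j)_{j\in J},d,H)$ be a hypergraph system, and let $(\nu_e)_{e\in H}$ be a pseudorandom system of measures on $V$. Suppose that for every $e'\subseteq J$ with $|e'|<d$ we are given a $\sigma$-algebra $\mathcal{B}_{e'}\subseteq\mathcal{A}_{e'}$ with $|\mathcal{B}_{e'}|\le M$. Let $e\in H$ and let $E'_e$ be a set in $\bigvee_{e'\subsetneq e}\mathcal{B}_{e'}$. Then for every $f:V_e\to\mathbb{R}$, $$\mathbb{E}\big(1_{E'_e}(x)f(\pi_e(x))\mid x\in V_J\big)=O_M\big(\|f\|_{\Box^e}\big).$$
   Context: A hypergraph system is a quadruple $V=(J,(V_j)_{j\in J},d,H)$ where $J$ is a finite set, each $V_j$ is a finite nonempty set, $d\ge1$ is an integer and $H\subseteq\binom{J}{d}:=\{e\subseteq J:|e|=d\}$. For $e\subseteq J$ put $V_e:=\prod_{j\in e}V_j$, let $\pi_e:V_J\to V_e$ be the coordinate projection and $\mathcal{A}_e:=\{\pi_e^{-1}(E):E\subseteq V_e\}$. $\bigvee$ denotes the smallest $\sigma$-algebra containing the given ones; $|\mathcal{B}|$ is the number of sets in the finite $\sigma$-algebra $\mathcal{B}$. For a finite nonempty set $Z$ and $f:Z\to\mathbb{R}$, $\mathbb{E}(f(x)\mid x\in Z):=|Z|^{-1}\sum_{x\in Z}f(x)$; constraints written after the bar mean uniform averaging over all tuples satisfying them. All objects depend on a parameter $N$ ranging over a sequence tending to infinity while $J,d,H$ are fixed; implicit constants may depend on $J$. $O_y(X)$ denotes a quantity bounded in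 magnitude by $C(y)X$; $o_{N\to\infty}(1)$ a quantity tending to $0$ as $N\to\infty$. Cube notation: for a finite set $e$, $\{0,1\}^e$ is the set of tuples $\omega=(\omega_j)_{j\in e}$ with $\omega_j\in\{0,1\}$, and $0^e$ is the all-zero tuple; for $x^{(0)}_J,x^{(1)}_J\in V_J$, $e\subseteq J$ and $\omega\in\{0,1\}^e$, set $x^{(\omega)}_e:=(x^{(\omega_j)}_j)_{j\in e}\in V_e$ and $x^{(a)}_e:=(x^{(a)}_j)_{j\in e}$ for $a\in\{0,1\}$. The Gowers cube norm of $f:V_e\to\mathbb{R}$ is $\|f\|_{\Box^e}:=\mathbb{E}\big(\prod_{\omega\in\{0,1\}^e}f(x^{(\omega)}_e)\mid x^{(0)}_e,x^{(1)}_e\in V_e\big)^{1/2^{|e|}}$. A system of measures is a family of functions $\nu_e:V_e\to[0,\infty)$, $e\in H$, with $\mathbb{E}(\nu_e(x_e)\mid x_e\in V_e)=1+o_{N\to\infty}(1)$. For $e\in H$ and $f:V_e\to\mathbb{R}$, $\mathcal{D}_ef(x^{(0)}_e):=\mathbb{E}\big(\prod_{\omega\in\{0,1\}^e,\ \omega\neq 0^e}f(x^{(\omega)}_e)\mid x^{(1)}_e\in V_e\big)$. The system is pseudorandom if: (i) $\mathcal{D}_e(\nu_e+1)(x_e)=O(1)$ for all $e\in H$, $x_e\in V_e$; (ii) for every choice of exponents $n_{e,\omega}\in\{0,1\}$, $\mathbb{E}\big(\prod_{e\in H}\prod_{\omega\in\{0,1\}^e}\nu_e(x^{(\omega)}_e)^{n_{e,\omega}}\mid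 x^{(0)}_J,x^{(1)}_J\in V_J\big)=1+o_{N\to\infty}(1)$; (iii) for every $e\in H$, $j\in e$, every choice of $n_{e,\omega}\in\{0,1\}$ and every integer $K\ge0$, $\mathbb{E}\Big(\mathbb{E}\big(\prod_{\omega\in\{0,1\}^e}\nu_e(x^{(\omega)}_e)^{n_{e,\omega}}\mid x^{(0)}_j,x^{(1)}_j\in V_j\big)^K\ \Big|\ x^{(0)}_{e\setminus\{j\}},x^{(1)}_{e\setminus\{j\}}\in V_{e\setminus\{j\}}\Big)=O_K(1)$. *)

theory Defs
  imports "HOL-Analysis.Analysis"
begin

definition avg :: "'a set \<Rightarrow> ('a \<Rightarrow> real) \<Rightarrow> real" where
  "avg S g = (\<Sum>x\<in>S. g x) / real (card S)"

definition Vprod :: "('j \<Rightarrow> 'v set) \<Rightarrow> 'j set \<Rightarrow> ('j \<Rightarrow> 'v) set" where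
  "Vprod V e = PiE e V"

definition proj :: "'j set \<Rightarrow> ('j \<Rightarrow> 'v) \<Rightarrow> ('j \<Rightarrow> 'v)" where
  "proj e x = restrict x e"

definition Aalg :: "('j \<Rightarrow> 'v set) \<Rightarrow> 'j set \<Rightarrow> 'j set \<Rightarrow> ('j \<Rightarrow> 'v) set set" where
  "Aalg V J e = {{x \<in> Vprod V J. proj e x \<in> E} | E. E \<subseteq> Vprod V e}"

(* cube vertex x^(omega)_e; omega in {0,1}^e is encoded as the subset w of e where omega_j = 1 *)
definition cube_pt :: "'j set \<Rightarrow> ('j \<Rightarrow> 'v) \<Rightarrow> ('j \<Rightarrow> 'v) \<Rightarrow> 'j set \<Rightarrow> ('j \<Rightarrow> 'v)" where
  "cube_pt e x0 x1 w = restrict (\<lambda>j. if j \<in> w then x1 j else x0 j) e"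

definition box_norm :: "('j \<Rightarrow> 'v set) \<Rightarrow> 'j set \<Rightarrow> (('j \<Rightarrow> 'v) \<Rightarrow> real) \<Rightarrow> real" where
  "box_norm V e f = root (2 ^ card e)
     (avg (Vprod V e \<times> Vprod V e) (\<lambda>(x0, x1). \<Prod>w\<in>Pow e. f (cube_pt e x0 x1 w)))"

definition dual_fun :: "('j \<Rightarrow> 'v set) \<Rightarrow> 'j set \<Rightarrow> (('j \<Rightarrow> 'v) \<Rightarrow> real) \<Rightarrow> ('j \<Rightarrow> 'v) \<Rightarrow> real" where
  "dual_fun V e f x0 = avg (Vprod V e) (\<lambda>x1. \<Prod>w\<in>Pow e - {{}}. f (cube_pt e x0 x1 w))"

(* hypergraph system, with the vertex sets depending on the asymptotic parameter n *)
definition hypergraph_system :: "'j set \<Rightarrow> (nat \<Rightarrow> 'j \<Rightarrow> 'v set) \<Rightarrow> nat \<Rightarrow> 'j set set \<Rightarrow> bool" where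
  "hypergraph_system J V d H \<longleftrightarrow> finite J \<and> d \<ge> 1 \<and> H \<subseteq> {e. e \<subseteq> J \<and> card e = d} \<and>
     (\<forall>n. \<forall>j\<in>J. finite (V n j) \<and> V n j \<noteq> {})"

definition system_of_measures :: "(nat \<Rightarrow> 'j \<Rightarrow> 'v set) \<Rightarrow> 'j set set \<Rightarrow>
    (nat \<Rightarrow> 'j set \<Rightarrow> ('j \<Rightarrow> 'v) \<Rightarrow> real) \<Rightarrow> bool" where
  "system_of_measures V H \<nu> \<longleftrightarrow>
     (\<forall>n. \<forall>e\<in>H. \<forall>x\<in>Vprod (V n) e. \<nu> n e x \<ge> 0) \<and>
     (\<forall>e\<in>H. (\<lambda>n. avg (Vprod (V n) e) (\<nu> n e)) \<longlonglongrightarrow> 1)"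

(* pseudorandomness conditions (i)-(iii); exponents n_{e,omega} in {0,1} encoded as nat-valued
   functions bounded by 1 *)
definition pseudorandom :: "'j set \<Rightarrow> (nat \<Rightarrow> 'j \<Rightarrow> 'v set) \<Rightarrow> 'j set set \<Rightarrow>
    (nat \<Rightarrow> 'j set \<Rightarrow> ('j \<Rightarrow> 'v) \<Rightarrow> real) \<Rightarrow> bool" where
  "pseudorandom J V H \<nu> \<longleftrightarrow>
     system_of_measures V H \<nu> \<and>
     (\<exists>C. \<forall>n. \<forall>e\<in>H. \<forall>x\<in>Vprod (V n) e.
         \<bar>dual_fun (V n) e (\<lambda>y. \<nu> n e y + 1) x\<bar> \<le> C) \<and>
     (\<forall>ex :: 'j set \<Rightarrow> 'j set \<Rightarrow> nat. (\<forall>e w. ex e w \<le> 1) \<longrightarrow>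
        (\<lambda>n. avg (Vprod (V n) J \<times> Vprod (V n) J)
            (\<lambda>(x0, x1). \<Prod>e\<in>H. \<Prod>w\<in>Pow e. \<nu> n e (cube_pt e x0 x1 w) ^ ex e w))
        \<longlonglongrightarrow> 1) \<and>
     (\<forall>e\<in>H. \<forall>j\<in>e. \<forall>ex :: 'j set \<Rightarrow> nat. (\<forall>w. ex w \<le> 1) \<longrightarrow> (\<forall>K::nat. \<exists>C. \<forall>n.
        \<bar>avg (Vprod (V n) (e - {j}) \<times> Vprod (V n) (e - {j}))
          (\<lambda>(y0, y1). (avg (V n j \<times> V n j)
             (\<lambda>(a0, a1). \<Prod>w\<in>Pow e. \<nu> n e (cube_pt e (y0(j := a0)) (y1(j := a1)) w) ^ ex w)) ^ K)\<bar>
        \<le> C))"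

end

theory Submission
  imports Defs
begin

(* The set E' lies in the \<sigma>-algebra generated by at most 2^d algebras B_{e'}, e' a proper
   subset of e, each with at most M sets.  Hence 1_{E'} is a sum of at most 2^(M 2^d)
   products of atom indicators, one for each e', and the factor belonging to e' does not
   depend on a coordinate j \<in> e - e'.  Grouping the factors by that coordinate, each term is
   bounded by the box norm of f: this weighted Gowers-Cauchy-Schwarz inequality follows by
   induction over the coordinates, with one Cauchy-Schwarz step per coordinate of e, where
   weights that do not depend on the current coordinate are pulled out and dropped. *)

lemma avg_Times: "avg (A \<times> B) h = avg A (\<lambda>a. avg B (\<lambda>b. h (a, b)))"
  unfolding avg_def
  by (simp add: sum.cartesian_product card_cartesian_product sum_divide_distrib[symmetric]
      mult.commute)

lemma avg_swap: "avg A (\<lambda>a. avg B (\<lambda>b. h a b)) = avg B (\<lambda>b. avg A (\<lambda>a. h a b))"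
  unfolding avg_def by (simp add: sum_divide_distrib[symmetric] sum.swap[of _ A] mult.commute)

lemma avg_cong: "(\<And>x. x \<in> S \<Longrightarrow> f x = g x) \<Longrightarrow> avg S f = avg S g"
  unfolding avg_def by (metis sum.cong)

lemma avg_mono: "(\<And>x. x \<in> S \<Longrightarrow> f x \<le> g x) \<Longrightarrow> avg S f \<le> avg S g"
  unfolding avg_def by (intro divide_right_mono sum_mono) auto

lemma avg_nonneg: "(\<And>x. x \<in> S \<Longrightarrow> 0 \<le> f x) \<Longrightarrow> 0 \<le> avg S f"
  unfolding avg_def by (simp add: sum_nonneg)

lemma avg_mult_left: "avg S (\<lambda>x. c * f x) = c * avg S f"
  unfolding avg_def by (simp add: sum_distrib_left)

lemma avg_add: "avg S (\<lambda>x. f x + g x) = avg S f + avg S g"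
  unfolding avg_def by (simp add: sum.distrib add_divide_distrib)

lemma avg_sum: "avg S (\<lambda>x. \<Sum>t\<in>T. F t x) = (\<Sum>t\<in>T. avg S (F t))"
  unfolding avg_def by (simp add: sum.swap[of _ S] sum_divide_distrib[symmetric])

lemma avg_const: "finite S \<Longrightarrow> S \<noteq> {} \<Longrightarrow> avg S (\<lambda>x. c) = c"
  unfolding avg_def by simp

lemma avg_power2: "(avg A U)\<^sup>2 = avg (A \<times> A) (\<lambda>(a, b). U a * U b)"
  unfolding avg_Times unfolding avg_def
  by (simp add: power2_eq_square sum_product sum_divide_distrib[symmetric])

lemma avg_power2_le: "(avg S Z)\<^sup>2 \<le> avg S (\<lambda>x. (Z x)\<^sup>2)"
proof (cases "finite S \<and> S \<noteq> {}")
  case True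
  then have fin: "finite S" and ne: "S \<noteq> {}" by auto
  define m where "m = avg S Z"
  have "0 \<le> avg S (\<lambda>x. (Z x - m)\<^sup>2)" by (rule avg_nonneg) simp
  also have "avg S (\<lambda>x. (Z x - m)\<^sup>2) = avg S (\<lambda>x. (Z x)\<^sup>2 + (-2 * m) * Z x + m\<^sup>2)"
    by (rule avg_cong) (simp add: power2_eq_square algebra_simps)
  also have "\<dots> = avg S (\<lambda>x. (Z x)\<^sup>2) + (-2 * m) * avg S Z + m\<^sup>2"
    by (simp only: avg_add avg_mult_left avg_const[OF fin ne])
  also have "\<dots> = avg S (\<lambda>x. (Z x)\<^sup>2) - m\<^sup>2" by (simp add: m_def power2_eq_square)
  finally show ?thesis unfolding m_def by simp
qed (auto simp: avg_def)

lemma avg_power_two_pow_le: "(avg S Z) ^ 2 ^ k \<le> avg S (\<lambda>x. Z x ^ 2 ^ k)"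
proof (induction k arbitrary: Z)
  case (Suc k)
  have "(avg S Z) ^ 2 ^ Suc k = ((avg S Z)\<^sup>2) ^ 2 ^ k"
    by (simp add: power_mult[symmetric] mult.commute)
  also have "\<dots> \<le> (avg S (\<lambda>x. (Z x)\<^sup>2)) ^ 2 ^ k"
    by (rule power_mono[OF avg_power2_le]) simp
  also have "\<dots> \<le> avg S (\<lambda>x. ((Z x)\<^sup>2) ^ 2 ^ k)" by (rule Suc)
  finally show ?case by (simp add: power_mult[symmetric] mult.commute)
qed simp

lemma avg_power_two_pow_le_bound:
  assumes "finite S" "S \<noteq> {}" "\<And>x. x \<in> S \<Longrightarrow> Z x ^ 2 ^ k \<le> c"
  shows "(avg S Z) ^ 2 ^ k \<le> c"
proof -
  have "(avg S Z) ^ 2 ^ k \<le> avg S (\<lambda>x. Z x ^ 2 ^ k)" by (rule avg_power_two_pow_le)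
  also have "\<dots> \<le> avg S (\<lambda>x. c)" using assms(3) by (rule avg_mono)
  finally show ?thesis using assms(1,2) by (simp add: avg_const)
qed

lemma avg_bounded_factor_power2_le:
  assumes "\<And>y. y \<in> Y \<Longrightarrow> \<bar>G y\<bar> \<le> 1"
  shows "(avg Y (\<lambda>y. G y * avg A (\<lambda>a. U a y)))\<^sup>2
    \<le> avg (A \<times> A) (\<lambda>(a, b). avg Y (\<lambda>y. U a y * U b y))"
proof -
  have "(avg Y (\<lambda>y. G y * avg A (\<lambda>a. U a y)))\<^sup>2 \<le> avg Y (\<lambda>y. (G y * avg A (\<lambda>a. U a y))\<^sup>2)"
    by (rule avg_power2_le)
  also have "\<dots> \<le> avg Y (\<lambda>y. (avg A (\<lambda>a. U a y))\<^sup>2)"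
  proof (rule avg_mono)
    fix y assume "y \<in> Y"
    then have "(G y)\<^sup>2 \<le> 1" using assms by (simp add: abs_square_le_1)
    then show "(G y * avg A (\<lambda>a. U a y))\<^sup>2 \<le> (avg A (\<lambda>a. U a y))\<^sup>2"
      by (simp add: power_mult_distrib mult_left_le_one_le)
  qed
  also have "\<dots> = avg (A \<times> A) (\<lambda>(a, b). avg Y (\<lambda>y. U a y * U b y))"
    unfolding avg_power2 avg_swap[of Y] by (simp add: case_prod_unfold)
  finally show ?thesis .
qed

lemma finite_Vprod: "finite D \<Longrightarrow> (\<And>j. j \<in> D \<Longrightarrow> finite (V j)) \<Longrightarrow> finite (Vprod V D)"
  unfolding Vprod_def by (auto intro: finite_PiE)

lemma Vprod_fun_upd: "x \<in> Vprod V D \<Longrightarrow> a \<in> V i \<Longrightarrow> x(i := a) \<in> Vprod V (insert i D)"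
  unfolding Vprod_def by (auto simp: PiE_iff)

lemma avg_Vprod_insert:
  assumes "i \<notin> D"
  shows "avg (Vprod V (insert i D)) h = avg (V i) (\<lambda>a. avg (Vprod V D) (\<lambda>y. h (y(i := a))))"
proof -
  have "avg (Vprod V (insert i D)) h = avg (V i \<times> Vprod V D) (\<lambda>(a, y). h (y(i := a)))"
    unfolding avg_def Vprod_def PiE_insert_eq
    using inj_combinator[OF assms, of V]
    by (simp add: sum.reindex card_image case_prod_unfold)
  then show ?thesis by (simp add: avg_Times)
qed

definition box_avg :: "('j \<Rightarrow> 'v set) \<Rightarrow> 'j set \<Rightarrow> (('j \<Rightarrow> 'v) \<Rightarrow> real) \<Rightarrow> real" where
  "box_avg V e f = avg (Vprod V e \<times> Vprod V e) (\<lambda>(x0, x1). \<Prod>w\<in>Pow e. f (cube_pt e x0 x1 w))"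

lemma box_norm_eq_root_box_avg: "box_norm V e f = root (2 ^ card e) (box_avg V e f)"
  unfolding box_norm_def box_avg_def ..

lemma cube_pt_insert_fun_upd:
  assumes "i \<notin> e" "w \<subseteq> e"
  shows "cube_pt (insert i e) (z0(i := a)) (z1(i := b)) w = (cube_pt e z0 z1 w)(i := a)"
    and "cube_pt (insert i e) (z0(i := a)) (z1(i := b)) (insert i w)
      = (cube_pt e z0 z1 w)(i := b)"
  using assms by (auto simp: cube_pt_def fun_eq_iff)

lemma prod_Pow_insert_cube_pt:
  assumes "i \<notin> e" "finite e"
  shows "(\<Prod>w\<in>Pow (insert i e). f (cube_pt (insert i e) (z0(i := a)) (z1(i := b)) w))
       = (\<Prod>w\<in>Pow e. f ((cube_pt e z0 z1 w)(i := a)) * f ((cube_pt e z0 z1 w)(i := b)))"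
proof -
  let ?c = "cube_pt (insert i e) (z0(i := a)) (z1(i := b))"
  have "Pow e \<inter> insert i ` Pow e = {}" "inj_on (insert i) (Pow e)"
    using assms(1) by (auto simp: inj_on_def)
  then have "(\<Prod>w\<in>Pow (insert i e). f (?c w))
      = (\<Prod>w\<in>Pow e. f (?c w)) * (\<Prod>w\<in>Pow e. f (?c (insert i w)))"
    unfolding Pow_insert using assms(2) by (simp add: prod.union_disjoint prod.reindex)
  also have "\<dots> = (\<Prod>w\<in>Pow e. f ((cube_pt e z0 z1 w)(i := a))) *
      (\<Prod>w\<in>Pow e. f ((cube_pt e z0 z1 w)(i := b)))"
    using assms(1)
    by (auto intro!: prod.cong arg_cong2[where f = "(*)"] simp: cube_pt_insert_fun_upd)
  finally show ?thesis by (simp only: prod.distrib)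
qed

lemma box_avg_insert:
  assumes "i \<notin> e" "finite e"
  shows "box_avg V (insert i e) f =
    avg (V i \<times> V i) (\<lambda>(a, b). box_avg V e (\<lambda>z. f (z(i := a)) * f (z(i := b))))"
proof -
  have "box_avg V (insert i e) f = avg (V i) (\<lambda>a. avg (Vprod V e) (\<lambda>z0. avg (V i) (\<lambda>b.
      avg (Vprod V e) (\<lambda>z1.
        \<Prod>w\<in>Pow (insert i e). f (cube_pt (insert i e) (z0(i := a)) (z1(i := b)) w)))))"
    unfolding box_avg_def avg_Times by (simp add: avg_Vprod_insert[OF assms(1)])
  also have "\<dots> = avg (V i) (\<lambda>a. avg (V i) (\<lambda>b. avg (Vprod V e) (\<lambda>z0. avg (Vprod V e) (\<lambda>z1.
      \<Prod>w\<in>Pow e. f ((cube_pt e z0 z1 w)(i := a)) * f ((cube_pt e z0 z1 w)(i := b))))))"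
    by (simp add: prod_Pow_insert_cube_pt[OF assms] avg_swap[where A = "Vprod V e" and B = "V i"])
  finally show ?thesis unfolding box_avg_def avg_Times by simp
qed

definition bounded_indep_weights ::
    "('j \<Rightarrow> 'v set) \<Rightarrow> 'j set \<Rightarrow> 'j set \<Rightarrow> ('j \<Rightarrow> ('j \<Rightarrow> 'v) \<Rightarrow> real) \<Rightarrow> bool" where
  "bounded_indep_weights V D e g \<longleftrightarrow>
     (\<forall>j\<in>e. \<forall>x\<in>Vprod V D. \<bar>g j x\<bar> \<le> 1 \<and> (\<forall>a\<in>V j. g j (x(j := a)) = g j x))"

lemma bounded_indep_weights_subset:
  "e' \<subseteq> e \<Longrightarrow> bounded_indep_weights V D e g \<Longrightarrow> bounded_indep_weights V D e' g"
  unfolding bounded_indep_weights_def by blast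

lemma bounded_indep_weights_mult:
  assumes "bounded_indep_weights V D e g" "bounded_indep_weights V D e h"
  shows "bounded_indep_weights V D e (\<lambda>j x. g j x * h j x)"
  using assms unfolding bounded_indep_weights_def by (simp add: abs_mult mult_le_one)

lemma bounded_indep_weights_fun_upd:
  assumes "bounded_indep_weights V (insert i D) e g" "i \<notin> e" "a \<in> V i"
  shows "bounded_indep_weights V D e (\<lambda>j y. g j (y(i := a)))"
  unfolding bounded_indep_weights_def
proof (intro ballI conjI)
  fix j y assume j: "j \<in> e" and y: "y \<in> Vprod V D"
  have ya: "y(i := a) \<in> Vprod V (insert i D)" using y assms(3) by (rule Vprod_fun_upd)
  with assms(1) j show "\<bar>g j (y(i := a))\<bar> \<le> 1" unfolding bounded_indep_weights_def by blast
  fix b assume "b \<in> V j"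
  moreover have "y(j := b, i := a) = (y(i := a))(j := b)"
    using j assms(2) by (auto simp: fun_upd_twist)
  ultimately show "g j (y(j := b, i := a)) = g j (y(i := a))"
    using assms(1) j ya unfolding bounded_indep_weights_def by simp
qed

lemma gowers_cauchy_schwarz_step_outside:
  assumes IH: "\<And>g f. bounded_indep_weights V D e g \<Longrightarrow>
      (avg (Vprod V D) (\<lambda>x. (\<Prod>j\<in>e. g j x) * f (proj e x))) ^ 2 ^ card e \<le> box_avg V e f"
    and "i \<notin> D" "i \<notin> e" "finite (V i)" "V i \<noteq> {}"
    and "bounded_indep_weights V (insert i D) e g"
  shows "(avg (Vprod V (insert i D)) (\<lambda>x. (\<Prod>j\<in>e. g j x) * f (proj e x))) ^ 2 ^ card e
    \<le> box_avg V e f"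
proof -
  have proj_upd: "proj e (y(i := a)) = proj e y" for y a
    using \<open>i \<notin> e\<close> by (auto simp: proj_def fun_eq_iff)
  have "avg (Vprod V (insert i D)) (\<lambda>x. (\<Prod>j\<in>e. g j x) * f (proj e x))
      = avg (V i) (\<lambda>a. avg (Vprod V D) (\<lambda>y. (\<Prod>j\<in>e. g j (y(i := a))) * f (proj e y)))"
    by (simp add: avg_Vprod_insert[OF \<open>i \<notin> D\<close>] proj_upd)
  also have "\<dots> ^ 2 ^ card e \<le> box_avg V e f"
    using assms(4,5)
  proof (rule avg_power_two_pow_le_bound)
    fix a assume "a \<in> V i"
    with assms(6,3) show "(avg (Vprod V D) (\<lambda>y. (\<Prod>j\<in>e. g j (y(i := a))) * f (proj e y)))
        ^ 2 ^ card e \<le> box_avg V e f"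
      by (intro IH bounded_indep_weights_fun_upd)
  qed
  finally show ?thesis .
qed

lemma gowers_cauchy_schwarz_step_inside:
  assumes IH: "\<And>g f. bounded_indep_weights V D e g \<Longrightarrow>
      (avg (Vprod V D) (\<lambda>x. (\<Prod>j\<in>e. g j x) * f (proj e x))) ^ 2 ^ card e \<le> box_avg V e f"
    and "i \<notin> D" "i \<notin> e" "finite e" "finite (V i)" "V i \<noteq> {}"
    and w: "bounded_indep_weights V (insert i D) (insert i e) g"
  shows "(avg (Vprod V (insert i D)) (\<lambda>x. (\<Prod>j\<in>insert i e. g j x) * f (proj (insert i e) x)))
      ^ 2 ^ card (insert i e) \<le> box_avg V (insert i e) f"
proof -
  (* As g i ignores coordinate i it is a function G of the other coordinates; Cauchy-Schwarz
     over them discards G and replaces f by the product of two copies differing in coordinate i. *)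
  obtain c where c: "c \<in> V i" using \<open>V i \<noteq> {}\<close> by auto
  define G where "G y = g i (y(i := c))" for y
  define U where "U a y = (\<Prod>j\<in>e. g j (y(i := a))) * f (proj (insert i e) (y(i := a)))" for a y
  have G: "g i (y(i := a)) = G y" "\<bar>G y\<bar> \<le> 1" if "y \<in> Vprod V D" "a \<in> V i" for y a
  proof -
    have "g i ((y(i := c))(i := a)) = g i (y(i := c))" "\<bar>g i (y(i := c))\<bar> \<le> 1"
      using w Vprod_fun_upd[OF that(1) c] that(2) unfolding bounded_indep_weights_def by auto
    then show "g i (y(i := a)) = G y" "\<bar>G y\<bar> \<le> 1" unfolding G_def by simp_all
  qed
  define S where "S = avg (Vprod V D) (\<lambda>y. G y * avg (V i) (\<lambda>a. U a y))"
  have "avg (Vprod V (insert i D)) (\<lambda>x. (\<Prod>j\<in>insert i e. g j x) * f (proj (insert i e) x))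
      = avg (V i) (\<lambda>a. avg (Vprod V D) (\<lambda>y. G y * U a y))"
    unfolding avg_Vprod_insert[OF \<open>i \<notin> D\<close>]
    by (intro avg_cong) (simp add: assms(3,4) G U_def)
  also have "\<dots> = S" unfolding S_def avg_swap[of "V i"] avg_mult_left ..
  finally have L: "avg (Vprod V (insert i D))
      (\<lambda>x. (\<Prod>j\<in>insert i e. g j x) * f (proj (insert i e) x)) = S" .
  have UU: "(avg (Vprod V D) (\<lambda>y. U a y * U b y)) ^ 2 ^ card e
      \<le> box_avg V e (\<lambda>z. f (z(i := a)) * f (z(i := b)))" if "a \<in> V i" "b \<in> V i" for a b
  proof -
    have proj_upd: "proj (insert i e) (y(i := t)) = (proj e y)(i := t)" for y t
      using \<open>i \<notin> e\<close> by (auto simp: proj_def fun_eq_iff)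
    have "avg (Vprod V D) (\<lambda>y. U a y * U b y) = avg (Vprod V D) (\<lambda>y.
        (\<Prod>j\<in>e. g j (y(i := a)) * g j (y(i := b))) * (\<lambda>z. f (z(i := a)) * f (z(i := b))) (proj e y))"
      unfolding U_def proj_upd by (simp add: prod.distrib algebra_simps)
    also have "\<dots> ^ 2 ^ card e \<le> box_avg V e (\<lambda>z. f (z(i := a)) * f (z(i := b)))"
      using bounded_indep_weights_subset[OF subset_insertI w] assms(3) that
      by (intro IH bounded_indep_weights_mult bounded_indep_weights_fun_upd)
    finally show ?thesis .
  qed
  have "S ^ 2 ^ card (insert i e) = (S\<^sup>2) ^ 2 ^ card e"
    using assms(3,4) by (simp add: power_mult[symmetric])
  also have "\<dots> \<le> (avg (V i \<times> V i) (\<lambda>(a, b). avg (Vprod V D) (\<lambda>y. U a y * U b y))) ^ 2 ^ card e"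
    unfolding S_def by (intro power_mono avg_bounded_factor_power2_le) (auto intro: G(2)[OF _ c])
  also have "\<dots> \<le> avg (V i \<times> V i) (\<lambda>(a, b). (avg (Vprod V D) (\<lambda>y. U a y * U b y)) ^ 2 ^ card e)"
    using avg_power_two_pow_le by (simp add: case_prod_unfold)
  also have "\<dots> \<le> avg (V i \<times> V i) (\<lambda>(a, b). box_avg V e (\<lambda>z. f (z(i := a)) * f (z(i := b))))"
    by (rule avg_mono) (auto intro: UU)
  also have "\<dots> = box_avg V (insert i e) f" using assms(3,4) by (simp add: box_avg_insert)
  finally show ?thesis unfolding L .
qed

theorem gowers_cauchy_schwarz_weighted:
  assumes "finite D" "\<forall>j\<in>D. finite (V j) \<and> V j \<noteq> {}" "e \<subseteq> D"
    and "bounded_indep_weights V D e g"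
  shows "(avg (Vprod V D) (\<lambda>x. (\<Prod>j\<in>e. g j x) * f (proj e x))) ^ 2 ^ card e \<le> box_avg V e f"
  using assms
proof (induction D arbitrary: e g f rule: finite_induct)
  case empty
  then show ?case by (simp add: Vprod_def box_avg_def avg_def proj_def cube_pt_def)
next
  case (insert i D)
  have IH: "(avg (Vprod V D) (\<lambda>x. (\<Prod>j\<in>e'. g' j x) * f' (proj e' x))) ^ 2 ^ card e'
      \<le> box_avg V e' f'" if "e' \<subseteq> D" "bounded_indep_weights V D e' g'" for e' g' f'
    using insert.IH insert.prems(1) that by blast
  have Vi: "finite (V i)" "V i \<noteq> {}" using insert.prems(1) by auto
  show ?case
  proof (cases "i \<in> e")
    case True
    define e0 where "e0 = e - {i}"
    have e: "e = insert i e0" and "i \<notin> e0" and e0D: "e0 \<subseteq> D"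
      using True insert.prems(2) unfolding e0_def by auto
    have "finite e0" using e0D insert.hyps(1) by (rule finite_subset)
    show ?thesis unfolding e
      using gowers_cauchy_schwarz_step_inside[OF IH[OF e0D] insert.hyps(2) \<open>i \<notin> e0\<close>
          \<open>finite e0\<close> Vi insert.prems(3)[unfolded e]] .
  next
    case False
    then have "e \<subseteq> D" using insert.prems(2) by auto
    show ?thesis
      by (rule gowers_cauchy_schwarz_step_outside[OF IH[OF \<open>e \<subseteq> D\<close>] insert.hyps(2) False Vi
            insert.prems(3)])
  qed
qed

corollary abs_avg_weighted_le_box_norm:
  assumes "finite D" "\<forall>j\<in>D. finite (V j) \<and> V j \<noteq> {}" "e \<subseteq> D" "e \<noteq> {}"
    and "bounded_indep_weights V D e g"
  shows "\<bar>avg (Vprod V D) (\<lambda>x. (\<Prod>j\<in>e. g j x) * f (proj e x))\<bar> \<le> box_norm V e f"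
proof -
  define t where "t = avg (Vprod V D) (\<lambda>x. (\<Prod>j\<in>e. g j x) * f (proj e x))"
  have "finite e" using assms(1,3) by (rule finite_subset[rotated])
  then have even: "even ((2::nat) ^ card e)" using assms(4) by (simp add: card_gt_0_iff)
  have "\<bar>t\<bar> = root (2 ^ card e) (\<bar>t\<bar> ^ 2 ^ card e)" by (simp add: real_root_power_cancel)
  also have "\<bar>t\<bar> ^ 2 ^ card e = t ^ 2 ^ card e" using even by (rule power_even_abs)
  also have "root (2 ^ card e) (t ^ 2 ^ card e) \<le> root (2 ^ card e) (box_avg V e f)"
    unfolding t_def using gowers_cauchy_schwarz_weighted[OF assms(1,2,3,5)] by simp
  finally show ?thesis unfolding t_def box_norm_eq_root_box_avg .
qed

corollary abs_avg_prod_le_box_norm: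
  assumes "finite D" "\<forall>j\<in>D. finite (V j) \<and> V j \<noteq> {}" "e \<subseteq> D" "e \<noteq> {}"
    and "finite P" "\<And>p. p \<in> P \<Longrightarrow> c p \<in> e"
    and "\<And>p x. p \<in> P \<Longrightarrow> x \<in> Vprod V D \<Longrightarrow> \<bar>h p x\<bar> \<le> 1"
    and "\<And>p x a. p \<in> P \<Longrightarrow> x \<in> Vprod V D \<Longrightarrow> a \<in> V (c p) \<Longrightarrow> h p (x(c p := a)) = h p x"
  shows "\<bar>avg (Vprod V D) (\<lambda>x. (\<Prod>p\<in>P. h p x) * f (proj e x))\<bar> \<le> box_norm V e f"
proof -
  define g where "g j x = (\<Prod>p\<in>{p\<in>P. c p = j}. h p x)" for j x
  have "finite e" using assms(1,3) by (rule finite_subset[rotated])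
  moreover have "c ` P \<subseteq> e" using assms(6) by blast
  ultimately have grouped: "(\<Prod>p\<in>P. h p x) = (\<Prod>j\<in>e. g j x)" for x
    unfolding g_def by (rule prod.group[OF assms(5), symmetric])
  have weights: "bounded_indep_weights V D e g"
    unfolding bounded_indep_weights_def
  proof (intro ballI conjI)
    fix j x assume "x \<in> Vprod V D"
    then show "\<bar>g j x\<bar> \<le> 1"
      unfolding g_def abs_prod using assms(7) by (intro prod_le_1) auto
    show "g j (x(j := a)) = g j x" if "a \<in> V j" for a
      unfolding g_def using assms(8) \<open>x \<in> Vprod V D\<close> that by (intro prod.cong) auto
  qed
  show ?thesis unfolding grouped using abs_avg_weighted_le_box_norm[OF assms(1-4) weights] .
qed

lemma box_norm_nonneg:
  assumes "finite e" "e \<noteq> {}" "\<forall>j\<in>e. finite (V j) \<and> V j \<noteq> {}"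
  shows "0 \<le> box_norm V e f"
proof -
  have "\<bar>avg (Vprod V e) (\<lambda>x. (\<Prod>p\<in>({}::nat set). 1) * f (proj e x))\<bar> \<le> box_norm V e f"
    by (rule abs_avg_prod_le_box_norm[where c = "\<lambda>_. undefined"]) (use assms in auto)
  then show ?thesis by (rule order_trans[OF abs_ge_zero])
qed

lemma sigma_sets_mem_iff:
  assumes "S \<in> sigma_sets \<Omega> G" "x \<in> \<Omega>" "y \<in> \<Omega>" "\<forall>A\<in>G. x \<in> A \<longleftrightarrow> y \<in> A"
  shows "x \<in> S \<longleftrightarrow> y \<in> S"
  using assms(1) by induction (use assms(2-4) in auto)

lemma prod_of_bool:
  "finite A \<Longrightarrow> (\<Prod>x\<in>A. of_bool (P x)) = (of_bool (\<forall>x\<in>A. P x) :: 'a::comm_semiring_1)"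
  by (induction A rule: finite_induct) auto

lemma indicator_eq_sum_prod_of_bool:
  fixes \<sigma> :: "'p \<Rightarrow> 'a \<Rightarrow> 'b"
  assumes "finite P" "finite E" "\<And>y. y \<in> E \<Longrightarrow> \<forall>p\<in>P. \<sigma> p y = \<sigma> p x \<Longrightarrow> x \<in> E"
  shows "indicator E x
    = (\<Sum>\<tau>\<in>(\<lambda>y. restrict (\<lambda>p. \<sigma> p y) P) ` E. \<Prod>p\<in>P. of_bool (\<sigma> p x = \<tau> p) :: real)"
proof -
  let ?s = "\<lambda>y. restrict (\<lambda>p. \<sigma> p y) P"
  have "(\<Prod>p\<in>P. of_bool (\<sigma> p x = \<tau> p)) = (of_bool (?s x = \<tau>) :: real)" if "\<tau> \<in> ?s ` E" for \<tau>
    using that \<open>finite P\<close> by (auto simp: prod_of_bool fun_eq_iff)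
  then have "(\<Sum>\<tau>\<in>?s ` E. \<Prod>p\<in>P. of_bool (\<sigma> p x = \<tau> p) :: real)
      = (\<Sum>\<tau>\<in>?s ` E. of_bool (?s x = \<tau>))"
    by (rule sum.cong[OF refl])
  also have "\<dots> = of_bool (?s x \<in> ?s ` E)"
    using \<open>finite E\<close> by (simp add: of_bool_def del: sum_of_bool_eq)
  also have "?s x \<in> ?s ` E \<longleftrightarrow> x \<in> E"
    using assms(3) by (auto simp: fun_eq_iff) metis
  finally show ?thesis unfolding indicator_def by (rule sym)
qed

lemma card_image_restrict_traces_le:
  assumes "finite P" "\<forall>p\<in>P. finite (B p)"
  shows "card ((\<lambda>y. restrict (\<lambda>p. {A \<in> B p. y \<in> A}) P) ` E) \<le> (\<Prod>p\<in>P. 2 ^ card (B p))"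
proof -
  have "(\<lambda>y. restrict (\<lambda>p. {A \<in> B p. y \<in> A}) P) ` E \<subseteq> PiE P (\<lambda>p. Pow (B p))" by auto
  then have "card ((\<lambda>y. restrict (\<lambda>p. {A \<in> B p. y \<in> A}) P) ` E)
      \<le> card (PiE P (\<lambda>p. Pow (B p)))"
    using assms by (intro card_mono finite_PiE) auto
  also have "\<dots> = (\<Prod>p\<in>P. 2 ^ card (B p))" using assms by (simp add: card_PiE card_Pow)
  finally show ?thesis .
qed

lemma Aalg_mem_fun_upd_iff:
  assumes "A \<in> Aalg W J e'" "x \<in> Vprod W J" "j \<in> J" "j \<notin> e'" "a \<in> W j"
  shows "x(j := a) \<in> A \<longleftrightarrow> x \<in> A"
proof -
  have "x(j := a) \<in> Vprod W J"
    using Vprod_fun_upd[OF assms(2,5)] assms(3) by (simp add: insert_absorb)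
  moreover have "proj e' (x(j := a)) = proj e' x"
    using assms(4) by (auto simp: proj_def fun_eq_iff)
  ultimately show ?thesis using assms(1,2) unfolding Aalg_def by auto
qed

lemma indicator_sigma_sets_eq_sum_atoms:
  assumes "finite \<Omega>" "finite P" "\<forall>p\<in>P. B p \<subseteq> Pow \<Omega>"
    and E: "E \<in> sigma_sets \<Omega> (\<Union>p\<in>P. B p)"
  obtains T where "card T \<le> (\<Prod>p\<in>P. 2 ^ card (B p))"
    and "\<And>x. x \<in> \<Omega> \<Longrightarrow>
      indicator E x = (\<Sum>\<tau>\<in>T. \<Prod>p\<in>P. of_bool ({A \<in> B p. x \<in> A} = \<tau> p) :: real)"
proof -
  let ?T = "(\<lambda>y. restrict (\<lambda>p. {A \<in> B p. y \<in> A}) P) ` E"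
  have "E \<subseteq> \<Omega>" using sigma_sets_into_sp[OF _ E] assms(3) by blast
  have "card ?T \<le> (\<Prod>p\<in>P. 2 ^ card (B p))"
    using assms(1-3) by (intro card_image_restrict_traces_le) (auto intro: finite_subset)
  moreover have "indicator E x = (\<Sum>\<tau>\<in>?T. \<Prod>p\<in>P. of_bool ({A \<in> B p. x \<in> A} = \<tau> p) :: real)"
    if "x \<in> \<Omega>" for x
  proof (rule indicator_eq_sum_prod_of_bool[OF \<open>finite P\<close>])
    show "finite E" using \<open>E \<subseteq> \<Omega>\<close> \<open>finite \<Omega>\<close> by (rule finite_subset)
    fix y assume "y \<in> E" "\<forall>p\<in>P. {A \<in> B p. y \<in> A} = {A \<in> B p. x \<in> A}"
    then have "\<forall>A\<in>(\<Union>p\<in>P. B p). x \<in> A \<longleftrightarrow> y \<in> A" by blast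
    with \<open>y \<in> E\<close> \<open>E \<subseteq> \<Omega>\<close> that show "x \<in> E" using sigma_sets_mem_iff[OF E] by blast
  qed
  ultimately show ?thesis by (rule that)
qed

lemma abs_avg_indicator_le_box_norm:
  fixes W :: "'j \<Rightarrow> 'v set" and B :: "'j set \<Rightarrow> ('j \<Rightarrow> 'v) set set"
  assumes "finite J" "\<forall>j\<in>J. finite (W j) \<and> W j \<noteq> {}" "e \<subseteq> J" "e \<noteq> {}"
    and B: "\<And>e'. e' \<subset> e \<Longrightarrow> B e' \<subseteq> Aalg W J e' \<and> card (B e') \<le> M"
    and E: "E' \<in> sigma_sets (Vprod W J) (\<Union>e'\<in>{e'. e' \<subset> e}. B e')"
  shows "\<bar>avg (Vprod W J) (\<lambda>x. indicator E' x * f (proj e x))\<bar>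
    \<le> 2 ^ (M * 2 ^ card e) * box_norm W e f"
proof -
  define \<Omega> P where "\<Omega> = Vprod W J" and "P = {e'. e' \<subset> e}"
  have "finite e" using assms(1,3) by (rule finite_subset[rotated])
  then have "finite P" unfolding P_def by (auto intro: finite_subset[of _ "Pow e"])
  have "finite \<Omega>" unfolding \<Omega>_def using assms(1,2) by (intro finite_Vprod) auto
  have "\<forall>e'\<in>P. B e' \<subseteq> Pow \<Omega>"
    using B unfolding Aalg_def \<Omega>_def P_def by blast
  moreover have "E' \<in> sigma_sets \<Omega> (\<Union>e'\<in>P. B e')" using E unfolding \<Omega>_def P_def .
  ultimately obtain T where card_T: "card T \<le> (\<Prod>e'\<in>P. 2 ^ card (B e'))"
    and indicator: "\<And>x. x \<in> \<Omega> \<Longrightarrow>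
      indicator E' x = (\<Sum>\<tau>\<in>T. \<Prod>e'\<in>P. of_bool ({A \<in> B e'. x \<in> A} = \<tau> e') :: real)"
    by (rule indicator_sigma_sets_eq_sum_atoms[OF \<open>finite \<Omega>\<close> \<open>finite P\<close>]) blast
  have "\<forall>e'\<in>P. \<exists>j. j \<in> e - e'" unfolding P_def by blast
  then obtain c where c: "\<And>e'. e' \<in> P \<Longrightarrow> c e' \<in> e - e'" by metis
  have summand: "\<bar>avg \<Omega> (\<lambda>x. (\<Prod>e'\<in>P. of_bool ({A \<in> B e'. x \<in> A} = \<tau> e')) * f (proj e x))\<bar>
      \<le> box_norm W e f" for \<tau> :: "'j set \<Rightarrow> ('j \<Rightarrow> 'v) set set"
    unfolding \<Omega>_def
  proof (rule abs_avg_prod_le_box_norm[OF assms(1-4) \<open>finite P\<close>, where c = c])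
    fix e' x a assume e': "e' \<in> P" and x: "x \<in> Vprod W J" and a: "a \<in> W (c e')"
    have "c e' \<in> J" "c e' \<notin> e'" "B e' \<subseteq> Aalg W J e'"
      using c[OF e'] assms(3) B e' unfolding P_def by auto
    then have "x(c e' := a) \<in> A \<longleftrightarrow> x \<in> A" if "A \<in> B e'" for A
      using that by (intro Aalg_mem_fun_upd_iff[OF _ x _ _ a]) auto
    then show "of_bool ({A \<in> B e'. x(c e' := a) \<in> A} = \<tau> e')
        = (of_bool ({A \<in> B e'. x \<in> A} = \<tau> e') :: real)" by auto
  qed (use c in auto)
  note card_T
  also have "(\<Prod>e'\<in>P. 2 ^ card (B e')) \<le> (\<Prod>e'\<in>P. 2 ^ M :: nat)"
    using B unfolding P_def by (intro prod_mono) auto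
  also have "\<dots> = 2 ^ (M * card P)" by (simp add: power_mult)
  also have "\<dots> \<le> 2 ^ (M * 2 ^ card e)"
    using card_mono[of "Pow e" P] \<open>finite e\<close> unfolding P_def by (auto simp: card_Pow)
  finally have card_T': "real (card T) \<le> 2 ^ (M * 2 ^ card e)" by (simp flip: of_nat_le_iff)
  have "avg \<Omega> (\<lambda>x. indicator E' x * f (proj e x))
      = (\<Sum>\<tau>\<in>T. avg \<Omega> (\<lambda>x. (\<Prod>e'\<in>P. of_bool ({A \<in> B e'. x \<in> A} = \<tau> e')) * f (proj e x)))"
    unfolding avg_sum[symmetric] by (rule avg_cong) (simp add: indicator sum_distrib_right)
  also have "\<bar>\<dots>\<bar> \<le> (\<Sum>\<tau>\<in>T. box_norm W e f)"
    by (intro order_trans[OF sum_abs] sum_mono summand)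
  also have "\<dots> \<le> 2 ^ (M * 2 ^ card e) * box_norm W e f"
  proof -
    have "0 \<le> box_norm W e f"
      using assms(2,3) by (intro box_norm_nonneg[OF \<open>finite e\<close> \<open>e \<noteq> {}\<close>]) auto
    then show ?thesis using card_T' by (simp add: mult_right_mono)
  qed
  finally show ?thesis unfolding \<Omega>_def .
qed

theorem mainTheorem6:
  fixes J :: "'j set" and d :: nat and H :: "'j set set" and M :: nat
  assumes "finite J" and "d \<ge> 1" and "H \<subseteq> {e. e \<subseteq> J \<and> card e = d}"
  shows "\<exists>C::real. \<forall>(V :: nat \<Rightarrow> 'j \<Rightarrow> 'v set) \<nu>.
     hypergraph_system J V d H \<longrightarrow> pseudorandom J V H \<nu> \<longrightarrow>
     (\<forall>n (B :: 'j set \<Rightarrow> ('j \<Rightarrow> 'v) set set) e E' (f :: ('j \<Rightarrow> 'v) \<Rightarrow> real).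
        (\<forall>e'. e' \<subseteq> J \<and> card e' < d \<longrightarrow>
            sigma_algebra (Vprod (V n) J) (B e') \<and> B e' \<subseteq> Aalg (V n) J e' \<and> card (B e') \<le> M) \<longrightarrow>
        e \<in> H \<longrightarrow>
        E' \<in> sigma_sets (Vprod (V n) J) (\<Union>e'\<in>{e'. e' \<subset> e}. B e') \<longrightarrow>
        \<bar>avg (Vprod (V n) J) (\<lambda>x. indicator E' x * f (proj e x))\<bar>
          \<le> C * box_norm (V n) e f)"
proof (intro exI[of _ "2 ^ (M * 2 ^ d)"] allI impI)
  fix V :: "nat \<Rightarrow> 'j \<Rightarrow> 'v set" and \<nu> n and B :: "'j set \<Rightarrow> ('j \<Rightarrow> 'v) set set" and e E'
    and f :: "('j \<Rightarrow> 'v) \<Rightarrow> real"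
  assume hs: "hypergraph_system J V d H" and "pseudorandom J V H \<nu>"
    and B: "\<forall>e'. e' \<subseteq> J \<and> card e' < d \<longrightarrow>
      sigma_algebra (Vprod (V n) J) (B e') \<and> B e' \<subseteq> Aalg (V n) J e' \<and> card (B e') \<le> M"
    and "e \<in> H" and E: "E' \<in> sigma_sets (Vprod (V n) J) (\<Union>e'\<in>{e'. e' \<subset> e}. B e')"
  have e: "e \<subseteq> J" "card e = d" using assms(3) \<open>e \<in> H\<close> by auto
  then have "finite e" "e \<noteq> {}" using assms(1,2) finite_subset by fastforce+
  have "B e' \<subseteq> Aalg (V n) J e' \<and> card (B e') \<le> M" if "e' \<subset> e" for e'
    using B psubset_card_mono[OF \<open>finite e\<close> that] that e by auto
  moreover have "\<forall>j\<in>J. finite (V n j) \<and> V n j \<noteq> {}"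
    using hs unfolding hypergraph_system_def by blast
  ultimately show "\<bar>avg (Vprod (V n) J) (\<lambda>x. indicator E' x * f (proj e x))\<bar>
      \<le> 2 ^ (M * 2 ^ d) * box_norm (V n) e f"
    using abs_avg_indicator_le_box_norm[OF assms(1) _ e(1) \<open>e \<noteq> {}\<close> _ E] e(2) by blast
qed

end
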